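(* Let $\mathbf{R}^{\mathrm{o}}$ be a finite set of obligations, $\mathbf{R}=(\emptyset,\mathbf{R}^{\mathrm{o}})$, $M$ an $\mathbf{R}$-ordered model and $w,v$ worlds of $M$. If $w\succ_I v$, then there exists $r_i\in\mathbf{R}^{\mathrm{o}}$ such that $w\models\mathrm{m}(r_i^{\triangleright})$ and $v\not\models\mathrm{m}(r_i^{\triangleright})$.
   Context: Boolean formulas over propositional letters; $\models_{\mathrm{PL}}$ classical, $\models_{\mathrm{S5}}$ S5 entailment. An obligation is $\bigcirc(x/a)$ ($a,x$ Boolean), body $b=a$, head $h=x$. Fix a set $\Gamma$ of alethic formulas; overriding: $r_j\triangleright r_i$ iff (i) $\{h(r_i),h(r_j)\}\cup\Gamma\models_{\mathrm{S5}}\bot$; (ii) $b(r_j)\models_{\mathrm{PL}}b(r_i)$ and $b(r_i)\not\models_{\mathrm{PL}}b(r_j)$; (iii) $\{h(r_i),b(r_j)\}\not\models_{\mathrm{PL}}\bot$. An $\mathbf{R}$-ordered model is $(W,\succeq_N,\succeq_I,v)$ with $W\neq\emptyset$, valuation, $\succeq_N=W\times W$, $w_1\succeq_I w_2$ iff $V(w_1)\subseteq V(w_2)$, where $V(w)=\{r_i\in\mathbf{R}^{\mathrm{o}}:w\models b(r_i)\wedge\neg h(r_i)$ and $w\not\models b(r_j)$ for all $r_j\in\mathbf{R}^{\mathrm{o}}$ with $r_j\triangleright r_i\}$; $w\succ_I v$ iff $w\succeq_I v$ and not $v\succeq_I w$. For $r_i=\bigcirc(x/a)$, $D(r_i)=\{r_j\in\mathbf{R}^{\mathrm{o}}:r_j\triangleright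 r_i\}$ and $r_i^{\triangleright}=(a\wedge\bigwedge_{r_j\in D(r_i)}\neg b(r_j),x)$ if $D(r_i)\neq\emptyset$, else $(a,x)$; $\mathrm{m}((c,y))=c\rightarrow y$. *)

theory Defs
  imports Main
begin

datatype 'p bform =
    BAtom 'p | BTop | BBot | BNot "'p bform" | BAnd "'p bform" "'p bform"
  | BOr "'p bform" "'p bform" | BImp "'p bform" "'p bform"

fun beval :: "('p \<Rightarrow> bool) \<Rightarrow> 'p bform \<Rightarrow> bool" where
  "beval I (BAtom p) = I p"
| "beval I BTop = True"
| "beval I BBot = False"
| "beval I (BNot a) = (\<not> beval I a)"
| "beval I (BAnd a b) = (beval I a \<and> beval I b)"
| "beval I (BOr a b) = (beval I a \<or> beval I b)"
| "beval I (BImp a b) = (beval I a \<longrightarrow> beval I b)"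

definition pl_entails :: "'p bform set \<Rightarrow> 'p bform \<Rightarrow> bool" where
  "pl_entails S a \<longleftrightarrow> (\<forall>I. (\<forall>b\<in>S. beval I b) \<longrightarrow> beval I a)"

fun big_and :: "'p bform list \<Rightarrow> 'p bform" where
  "big_and [] = BTop"
| "big_and [a] = a"
| "big_and (a # as) = BAnd a (big_and as)"

datatype 'p mform =
    MAtom 'p | MTop | MBot | MNot "'p mform" | MAnd "'p mform" "'p mform"
  | MOr "'p mform" "'p mform" | MImp "'p mform" "'p mform"
  | MBox "'p mform" | MDia "'p mform"

fun emb :: "'p bform \<Rightarrow> 'p mform" where
  "emb (BAtom p) = MAtom p"
| "emb BTop = MTop"
| "emb BBot = MBot"
| "emb (BNot a) = MNot (emb a)"
| "emb (BAnd a b) = MAnd (emb a) (emb b)"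
| "emb (BOr a b) = MOr (emb a) (emb b)"
| "emb (BImp a b) = MImp (emb a) (emb b)"

fun meval :: "'w set \<Rightarrow> ('w \<Rightarrow> 'p \<Rightarrow> bool) \<Rightarrow> 'w \<Rightarrow> 'p mform \<Rightarrow> bool" where
  "meval W V w (MAtom p) = V w p"
| "meval W V w MTop = True"
| "meval W V w MBot = False"
| "meval W V w (MNot a) = (\<not> meval W V w a)"
| "meval W V w (MAnd a b) = (meval W V w a \<and> meval W V w b)"
| "meval W V w (MOr a b) = (meval W V w a \<or> meval W V w b)"
| "meval W V w (MImp a b) = (meval W V w a \<longrightarrow> meval W V w b)"
| "meval W V w (MBox a) = (\<forall>u\<in>W. meval W V u a)"
| "meval W V w (MDia a) = (\<exists>u\<in>W. meval W V u a)"

text \<open>Worlds are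
  taken to be valuations themselves, which is fully general for S5 (truth of a formula at a
  world depends only on the set of valuations realised in the model and the world's own).\<close>
definition s5_entails :: "'p mform set \<Rightarrow> 'p mform \<Rightarrow> bool" where
  "s5_entails S a \<longleftrightarrow>
     (\<forall>(W :: ('p \<Rightarrow> bool) set) w. w \<in> W \<longrightarrow> (\<forall>b\<in>S. meval W (\<lambda>u. u) w b) \<longrightarrow> meval W (\<lambda>u. u) w a)"

text \<open>An obligation \<open>\<bigcirc>(x/a)\<close> is represented by the pair \<open>(a, x)\<close>: body \<open>a\<close>, head \<open>x\<close>.\<close>
type_synonym 'p obl = "'p bform \<times> 'p bform"

definition body :: "'p obl \<Rightarrow> 'p bform" where "body r = fst r"
definition head :: "'p obl \<Rightarrow> 'p bform" where "head r = snd r"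

definition overrides :: "'p mform set \<Rightarrow> 'p obl \<Rightarrow> 'p obl \<Rightarrow> bool" where
  "overrides \<Gamma> rj ri \<longleftrightarrow>
     s5_entails ({emb (head ri), emb (head rj)} \<union> \<Gamma>) MBot
   \<and> pl_entails {body rj} (body ri) \<and> \<not> pl_entails {body ri} (body rj)
   \<and> \<not> pl_entails {head ri, body rj} BBot"

definition viol :: "'p mform set \<Rightarrow> 'p obl set \<Rightarrow> ('p \<Rightarrow> bool) \<Rightarrow> 'p obl set" where
  "viol \<Gamma> Ro I = {ri \<in> Ro. beval I (body ri) \<and> \<not> beval I (head ri)
      \<and> (\<forall>rj\<in>Ro. overrides \<Gamma> rj ri \<longrightarrow> \<not> beval I (body rj))}"

definition ordered_model ::
  "'p mform set \<Rightarrow> 'p obl set \<Rightarrow> 'w set \<Rightarrow> ('w \<times> 'w) set \<Rightarrow> ('w \<times> 'w) set \<Rightarrow> ('w \<Rightarrow> 'p \<Rightarrow> bool) \<Rightarrow> bool" where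
  "ordered_model \<Gamma> Ro W geN geI val \<longleftrightarrow>
     W \<noteq> {} \<and> geN = W \<times> W
   \<and> geI = {(w1, w2) \<in> W \<times> W. viol \<Gamma> Ro (val w1) \<subseteq> viol \<Gamma> Ro (val w2)}"

definition strictI :: "('w \<times> 'w) set \<Rightarrow> 'w \<Rightarrow> 'w \<Rightarrow> bool" where
  "strictI geI w v \<longleftrightarrow> (w, v) \<in> geI \<and> (v, w) \<notin> geI"

definition overriders :: "'p mform set \<Rightarrow> 'p obl set \<Rightarrow> 'p obl \<Rightarrow> 'p obl set" where
  "overriders \<Gamma> Ro ri = {rj \<in> Ro. overrides \<Gamma> rj ri}"

text \<open>\<open>r_i^\<triangleright>\<close>; the conjunction over the finite set \<open>D(r_i)\<close> is taken in an
  (arbitrary) enumeration order, which does not affect its meaning.\<close>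
definition refine :: "'p mform set \<Rightarrow> 'p obl set \<Rightarrow> 'p obl \<Rightarrow> 'p obl" where
  "refine \<Gamma> Ro ri =
    (if overriders \<Gamma> Ro ri \<noteq> {}
     then (BAnd (body ri)
             (big_and (map (\<lambda>rj. BNot (body rj))
                (SOME xs. set xs = overriders \<Gamma> Ro ri \<and> distinct xs))),
           head ri)
     else (body ri, head ri))"

definition mat :: "'p obl \<Rightarrow> 'p bform" where
  "mat c = BImp (fst c) (snd c)"

end

theory Submission
  imports Defs
begin

text \<open>The material implication \<open>m(r\<^sub>i\<^sup>\<triangleright>)\<close> fails at a world exactly when
  \<open>r\<^sub>i\<close> belongs to the world's violation set \<open>V\<close>. Since \<open>w \<succ>\<^sub>I v\<close> means
  \<open>V(w) \<subset> V(v)\<close>, any obligation in \<open>V(v) - V(w)\<close> is the required witness.\<close>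

lemma beval_big_and: "beval I (big_and xs) \<longleftrightarrow> (\<forall>x\<in>set xs. beval I x)"
  by (induction xs rule: big_and.induct) auto

lemma set_some_distinct_list:
  assumes "finite A"
  shows "set (SOME xs. set xs = A \<and> distinct xs) = A"
  using someI_ex[OF finite_distinct_list[OF assms]] by blast

lemma finite_overriders: "finite Ro \<Longrightarrow> finite (overriders \<Gamma> Ro ri)"
  unfolding overriders_def by simp

lemma beval_mat_refine_iff:
  assumes "finite Ro" and "ri \<in> Ro"
  shows "beval I (mat (refine \<Gamma> Ro ri)) \<longleftrightarrow> ri \<notin> viol \<Gamma> Ro I"
proof (cases "overriders \<Gamma> Ro ri = {}")
  case True
  then show ?thesis
    using assms(2) unfolding refine_def mat_def viol_def overriders_def by auto
next
  case False
  define xs where "xs = (SOME xs. set xs = overriders \<Gamma> Ro ri \<and> distinct xs)"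
  have set_xs: "set xs = overriders \<Gamma> Ro ri"
    unfolding xs_def using set_some_distinct_list[OF finite_overriders[OF assms(1)]] .
  have "refine \<Gamma> Ro ri = (BAnd (body ri) (big_and (map (\<lambda>rj. BNot (body rj)) xs)), head ri)"
    using False unfolding refine_def xs_def by simp
  then show ?thesis
    using assms(2) set_xs unfolding mat_def viol_def overriders_def
    by (auto simp: beval_big_and)
qed

lemma ordered_model_strictI_viol_psubset:
  assumes "ordered_model \<Gamma> Ro W geN geI val" and "w \<in> W" and "v \<in> W"
    and "strictI geI w v"
  shows "viol \<Gamma> Ro (val w) \<subset> viol \<Gamma> Ro (val v)"
  using assms unfolding ordered_model_def strictI_def by auto

theorem lemma2:
  fixes \<Gamma> :: "'p mform set" and Ro :: "'p obl set"
    and W :: "'w set" and geN geI :: "('w \<times> 'w) set" and val :: "'w \<Rightarrow> 'p \<Rightarrow> bool"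
    and w v :: 'w
  assumes "finite Ro"
    and "ordered_model \<Gamma> Ro W geN geI val"
    and "w \<in> W" and "v \<in> W"
    and "strictI geI w v"
  shows "\<exists>ri\<in>Ro. beval (val w) (mat (refine \<Gamma> Ro ri)) \<and> \<not> beval (val v) (mat (refine \<Gamma> Ro ri))"
proof -
  obtain ri where ri: "ri \<in> viol \<Gamma> Ro (val v)" "ri \<notin> viol \<Gamma> Ro (val w)"
    using ordered_model_strictI_viol_psubset[OF assms(2-5)] by blast
  then have "ri \<in> Ro"
    unfolding viol_def by simp
  with ri show ?thesis
    using beval_mat_refine_iff[OF assms(1)] by blast
qed

end
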